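(* There is an absolute constant $c>0$ such that for every celebrity game $\Gamma=\langle V,(w_u)_{u\in V},\alpha,\beta\rangle$ with $\beta>1$ that has a Nash equilibrium whose outcome graph is 2-edge-connected, and for every Nash equilibrium $S$ of $\Gamma$ whose outcome graph $G[S]$ is 2-edge-connected, we have $C(S)/\mathrm{opt}(\Gamma)\le c\,n/\beta$, where $n=|V|$.
   Context: A celebrity game $\Gamma=\langle V,(w_u)_{u\in V},\alpha,\beta\rangle$ consists of a set of players $V=\{1,\dots,n\}$, celebrity weights $w_u>0$, a link cost $\alpha>0$ and a critical distance $\beta$ with $1\le\beta\le n-1$. A strategy of player $u$ is a set $S_u\subseteq V\setminus\{u\}$; a strategy profile is $S=(S_1,\dots,S_n)$; its outcome graph $G[S]$ is the undirected graph on $V$ with edge set $\{\{u,v\}: u\in S_v\text{ or }v\in S_u\}$. With $d_G$ the graph distance (infinite between different connected components), the cost of player $u$ is $c_u(S)=\alpha|S_u|+\sum_{v:\,d_{G[S]}(u,v)>\beta}w_v$ and the social cost is $C(S)=\sum_{u\in V}c_u(S)$. $S$ is a Nash equilibrium if no player can strictly decrease its cost by changing only its own strategy. $\mathrm{opt}(\Gamma)=\min_S C(S)$ over all strategy profiles. *)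

theory Defs
  imports Main "HOL-Library.Extended_Nat"
begin

definition profile :: "nat \<Rightarrow> (nat \<Rightarrow> nat set) \<Rightarrow> bool" where
  "profile n S \<longleftrightarrow> (\<forall>u\<in>{1..n}. S u \<subseteq> {1..n} - {u}) \<and> (\<forall>u. u \<notin> {1..n} \<longrightarrow> S u = {})"

definition outcome_edges :: "nat \<Rightarrow> (nat \<Rightarrow> nat set) \<Rightarrow> nat set set" where
  "outcome_edges n S = {{u, v} | u v. u \<in> {1..n} \<and> v \<in> {1..n} \<and> (v \<in> S u \<or> u \<in> S v)}"

definition adj :: "'a set set \<Rightarrow> ('a \<times> 'a) set" where
  "adj E = {(u, v). u \<noteq> v \<and> {u, v} \<in> E}"

definition gdist :: "'a set set \<Rightarrow> 'a \<Rightarrow> 'a \<Rightarrow> enat" where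
  "gdist E u v = (if \<exists>k. (u, v) \<in> adj E ^^ k
                  then enat (LEAST k. (u, v) \<in> adj E ^^ k) else \<infinity>)"

definition connected_graph :: "'a set \<Rightarrow> 'a set set \<Rightarrow> bool" where
  "connected_graph V E \<longleftrightarrow> (\<forall>u\<in>V. \<forall>v\<in>V. (u, v) \<in> (adj E)\<^sup>*)"

definition two_edge_connected :: "'a set \<Rightarrow> 'a set set \<Rightarrow> bool" where
  "two_edge_connected V E \<longleftrightarrow> connected_graph V E \<and> (\<forall>e\<in>E. connected_graph V (E - {e}))"

definition player_cost :: "nat \<Rightarrow> (nat \<Rightarrow> real) \<Rightarrow> real \<Rightarrow> nat \<Rightarrow> (nat \<Rightarrow> nat set) \<Rightarrow> nat \<Rightarrow> real" where
  "player_cost n w \<alpha> \<beta> S u =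
     \<alpha> * real (card (S u)) + (\<Sum>v \<in> {v \<in> {1..n}. gdist (outcome_edges n S) u v > enat \<beta>}. w v)"

definition social_cost :: "nat \<Rightarrow> (nat \<Rightarrow> real) \<Rightarrow> real \<Rightarrow> nat \<Rightarrow> (nat \<Rightarrow> nat set) \<Rightarrow> real" where
  "social_cost n w \<alpha> \<beta> S = (\<Sum>u\<in>{1..n}. player_cost n w \<alpha> \<beta> S u)"

definition nash_eq :: "nat \<Rightarrow> (nat \<Rightarrow> real) \<Rightarrow> real \<Rightarrow> nat \<Rightarrow> (nat \<Rightarrow> nat set) \<Rightarrow> bool" where
  "nash_eq n w \<alpha> \<beta> S \<longleftrightarrow> profile n S \<and>
     (\<forall>u\<in>{1..n}. \<forall>T. T \<subseteq> {1..n} - {u} \<longrightarrow>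
        player_cost n w \<alpha> \<beta> S u \<le> player_cost n w \<alpha> \<beta> (S(u := T)) u)"

definition opt :: "nat \<Rightarrow> (nat \<Rightarrow> real) \<Rightarrow> real \<Rightarrow> nat \<Rightarrow> real" where
  "opt n w \<alpha> \<beta> = Min (social_cost n w \<alpha> \<beta> ` {S. profile n S})"

end

theory Submission
  imports Defs "HOL-Library.FuncSet" "HOL-Library.Disjoint_Sets"
begin

text \<open>Let S be a Nash equilibrium with 2-edge-connected outcome graph G and let W be the
  total weight. No player pays more than W, since buying nothing is an option. Every edge ux
  bought by u is critical: deleting it pushes some vertex from distance at most \<beta> to
  distance more than \<beta>. Using 2-edge-connectivity, the Voronoi cell of x among the neighbours
  of u in G - u then contains vertices at every distance up to \<beta>/3 from x, so u buys at
  most 3n/\<beta> edges. Buying edges to a maximal \<beta>-separated set X would bring every vertex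
  within distance \<beta>, so the far weight of u is at most \<alpha>|X|, and the disjoint balls of
  radius (\<beta>-1)/2 around X give |X| \<le> 2n/\<beta>. Hence \<beta> C(S) \<le> 5n^2 min(\<alpha>, W), while every
  profile costs at least (n/4) min(\<alpha>, W).\<close>

section \<open>Graph distance\<close>

lemma sym_adj: "sym (adj E)"
  by (auto simp: sym_def adj_def insert_commute)

lemma relpow_mono: "(R :: ('a \<times> 'a) set) \<subseteq> R' \<Longrightarrow> R ^^ k \<subseteq> R' ^^ k"
  by (induction k) (auto simp: relpow.simps)

lemma sym_relpow: "sym (R :: ('a \<times> 'a) set) \<Longrightarrow> sym (R ^^ k)"
proof (induction k)
  case (Suc k)
  show ?case
  proof (rule symI)
    fix u v assume "(u, v) \<in> R ^^ Suc k"
    then obtain m where "(u, m) \<in> R ^^ k" "(m, v) \<in> R" by auto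
    with Suc show "(v, u) \<in> R ^^ Suc k" by (meson relpow_Suc_I2 symD)
  qed
qed (simp add: sym_Id)

lemma gdist_le_if_relpow: "(u, v) \<in> adj E ^^ k \<Longrightarrow> gdist E u v \<le> enat k"
  unfolding gdist_def by (auto intro: Least_le)

lemma relpow_if_gdist_eq: "gdist E u v = enat d \<Longrightarrow> (u, v) \<in> adj E ^^ d"
  unfolding gdist_def by (auto split: if_splits intro: LeastI)

lemma gdist_eq_infinity_iff: "gdist E u v = \<infinity> \<longleftrightarrow> (\<forall>k. (u, v) \<notin> adj E ^^ k)"
  unfolding gdist_def by auto

lemma gdist_self [simp]: "gdist E u u = 0"
  using gdist_le_if_relpow[of u u 0 E] by (simp flip: zero_enat_def)

lemma gdist_triangle: "gdist E u w \<le> gdist E u v + gdist E v w"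
proof (cases "gdist E u v = \<infinity> \<or> gdist E v w = \<infinity>")
  case False
  then obtain a b where a: "gdist E u v = enat a" and b: "gdist E v w = enat b" by auto
  have "(u, w) \<in> adj E ^^ (a + b)"
    using relpow_if_gdist_eq[OF a] relpow_if_gdist_eq[OF b] by (rule relpow_trans)
  then show ?thesis using a b gdist_le_if_relpow by fastforce
qed auto

lemma gdist_triangle_enat:
  "gdist E u v \<le> enat a \<Longrightarrow> gdist E v w \<le> enat b \<Longrightarrow> gdist E u w \<le> enat (a + b)"
  using gdist_triangle[of E u w v] add_mono[of "gdist E u v" "enat a" "gdist E v w" "enat b"]
  by simp

lemma gdist_gt_if_far:
  assumes "gdist E q w \<le> enat e" "enat t \<le> gdist E z w" "s + e < t"
  shows "enat s < gdist E z q"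
proof (rule ccontr)
  assume "\<not> ?thesis"
  then have "gdist E z w \<le> enat (s + e)" using assms(1) by (intro gdist_triangle_enat) auto
  then show False using assms(2,3) by (meson enat_ord_simps(1) leD order_trans)
qed

lemma gdist_sym: "gdist E u v = gdist E v u"
proof -
  have "(u, v) \<in> adj E ^^ k \<longleftrightarrow> (v, u) \<in> adj E ^^ k" for k
    using sym_relpow[OF sym_adj[of E]] by (auto dest: symD)
  then show ?thesis unfolding gdist_def by simp
qed

lemma gdist_antimono: "E \<subseteq> E' \<Longrightarrow> gdist E' u v \<le> gdist E u v"
proof (cases "gdist E u v")
  case (enat d)
  assume "E \<subseteq> E'"
  then have "adj E \<subseteq> adj E'" by (auto simp: adj_def)
  then have "(u, v) \<in> adj E' ^^ d" using relpow_if_gdist_eq[OF enat] relpow_mono by blast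
  then show ?thesis using enat gdist_le_if_relpow by simp
qed simp

lemma gdist_edge_le_1: "{u, v} \<in> E \<Longrightarrow> u \<noteq> v \<Longrightarrow> gdist E u v \<le> 1"
  using gdist_le_if_relpow[of u v 1 E] by (simp add: adj_def one_enat_def)

lemma gdist_intermediate_vertex:
  assumes "gdist E u v = enat d" "s \<le> d"
  obtains q where "gdist E u q = enat s" "gdist E q v = enat (d - s)"
proof -
  have "(u, v) \<in> adj E ^^ (s + (d - s))" using relpow_if_gdist_eq[OF assms(1)] assms(2) by simp
  then obtain q where q1: "(u, q) \<in> adj E ^^ s" and q2: "(q, v) \<in> adj E ^^ (d - s)"
    by (auto simp: relpow_add)
  from gdist_le_if_relpow[OF q1] obtain a where a: "gdist E u q = enat a" "a \<le> s"
    by (cases "gdist E u q") auto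
  from gdist_le_if_relpow[OF q2] obtain b where b: "gdist E q v = enat b" "b \<le> d - s"
    by (cases "gdist E q v") auto
  have "enat d \<le> enat a + enat b" using gdist_triangle[of E u v q] assms(1) a b by simp
  then have "a = s" "b = d - s" using a b assms(2) by auto
  then show ?thesis using that a b by blast
qed

lemma gdist_finite_if_connected:
  "connected_graph V E \<Longrightarrow> u \<in> V \<Longrightarrow> v \<in> V \<Longrightarrow> gdist E u v \<noteq> \<infinity>"
  unfolding connected_graph_def gdist_eq_infinity_iff using rtrancl_imp_relpow by blast

lemma relpow_adj_closed:
  assumes "\<forall>e\<in>E. e \<subseteq> V" "u \<in> V" "(u, v) \<in> adj E ^^ k"
  shows "v \<in> V"
  using assms(3)
proof (induction k arbitrary: v)
  case (Suc k)
  then obtain m where "(u, m) \<in> adj E ^^ k" "(m, v) \<in> adj E" by auto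
  then show ?case using Suc.IH assms(1) by (auto simp: adj_def)
qed (use assms(2) in simp)

lemma gdist_finite_closed:
  "\<forall>e\<in>E. e \<subseteq> V \<Longrightarrow> u \<in> V \<Longrightarrow> gdist E u v \<noteq> \<infinity> \<Longrightarrow> v \<in> V"
  using relpow_adj_closed gdist_eq_infinity_iff by metis

definition edges_avoiding :: "'a set set \<Rightarrow> 'a \<Rightarrow> 'a set set" where
  "edges_avoiding E u = {e \<in> E. u \<notin> e}"

definition neighbours :: "'a set set \<Rightarrow> 'a \<Rightarrow> 'a set" where
  "neighbours E u = {z. {u, z} \<in> E \<and> z \<noteq> u}"

lemma relpow_adj_leaves_via_neighbour:
  "(u, y) \<in> adj E ^^ k \<Longrightarrow>
     y = u \<or> (\<exists>z\<in>neighbours E u. \<exists>j<k. (z, y) \<in> adj (edges_avoiding E u) ^^ j)"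
proof (induction k arbitrary: y)
  case (Suc k)
  then obtain m where um: "(u, m) \<in> adj E ^^ k" and my: "(m, y) \<in> adj E" by auto
  consider "y = u" | "y \<noteq> u" "m = u" | "y \<noteq> u" "m \<noteq> u" by blast
  then show ?case
  proof cases
    case 2
    then have "y \<in> neighbours E u" using my by (auto simp: adj_def neighbours_def)
    then show ?thesis by force
  next
    case 3
    then obtain z j where "z \<in> neighbours E u" "j < k" "(z, m) \<in> adj (edges_avoiding E u) ^^ j"
      using Suc.IH[OF um] by blast
    moreover have "(m, y) \<in> adj (edges_avoiding E u)"
      using my 3 by (auto simp: adj_def edges_avoiding_def)
    ultimately show ?thesis by (meson Suc_less_eq relpow_Suc_I)
  qed simp
qed simp

lemma gdist_via_neighbour:
  assumes "gdist E u y \<le> enat b" "y \<noteq> u"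
  shows "\<exists>z\<in>neighbours E u. gdist (edges_avoiding E u) z y < enat b"
proof -
  obtain d where d: "gdist E u y = enat d" "d \<le> b" using assms(1) by (cases "gdist E u y") auto
  obtain z j where "z \<in> neighbours E u" "j < d" "(z, y) \<in> adj (edges_avoiding E u) ^^ j"
    using relpow_adj_leaves_via_neighbour[OF relpow_if_gdist_eq[OF d(1)]] assms(2) by blast
  then show ?thesis
    using d(2) by (metis gdist_le_if_relpow enat_ord_simps(2) le_less_trans order_less_le_trans)
qed

lemma gdist_from_isolated:
  "\<forall>e\<in>E. v \<notin> e \<Longrightarrow> y \<noteq> v \<Longrightarrow> gdist E v y = \<infinity>"
  unfolding gdist_eq_infinity_iff using relpow_adj_leaves_via_neighbour
  by (fastforce simp: neighbours_def)

lemma gdist_le_via_adjacent: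
  assumes "E \<subseteq> E'" "x = u \<or> {u, x} \<in> E'" "gdist E x v < enat r"
  shows "gdist E' u v \<le> enat r"
proof -
  obtain d where d: "gdist E x v = enat d" "d < r" using assms(3) by (auto elim: less_enatE)
  have "gdist E' u x \<le> enat 1"
    using assms(2) gdist_edge_le_1[of u x E'] by (cases "x = u") (auto simp: one_enat_def)
  moreover have "gdist E' x v \<le> enat d" using gdist_antimono[OF assms(1), of x v] d(1) by simp
  ultimately have "gdist E' u v \<le> enat (1 + d)" by (rule gdist_triangle_enat)
  then show ?thesis using d(2) by (simp add: order_trans)
qed

section \<open>Separated sets\<close>

lemma card_ge_if_gdist_attains:
  assumes "finite A" "\<And>s. s < m \<Longrightarrow> \<exists>q\<in>A. gdist E x q = enat s"
  shows "m \<le> card A"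
proof -
  have "enat ` {..<m} \<subseteq> gdist E x ` A" using assms(2) by force
  then have "card (enat ` {..<m}) \<le> card (gdist E x ` A)" by (simp add: assms(1) card_mono)
  also have "\<dots> \<le> card A" using assms(1) by (rule card_image_le)
  finally show ?thesis by (simp add: card_image inj_on_def)
qed

lemma card_disjoint_family_le:
  assumes "finite V" "finite X" "\<And>x. x \<in> X \<Longrightarrow> B x \<subseteq> V" "\<And>x. x \<in> X \<Longrightarrow> m \<le> card (B x)"
    and "disjoint_family_on B X"
  shows "card X * m \<le> card V"
proof -
  have "card X * m \<le> (\<Sum>x\<in>X. card (B x))" using assms(4) sum_mono[of X "\<lambda>_. m"] by simp
  also have "\<dots> = card (\<Union>x\<in>X. B x)"
    using assms by (metis card_UN_disjoint' finite_subset)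
  also have "\<dots> \<le> card V" using assms(1,3) by (intro card_mono) auto
  finally show ?thesis .
qed

definition separated :: "'a set set \<Rightarrow> nat \<Rightarrow> 'a set \<Rightarrow> bool" where
  "separated E r X \<longleftrightarrow> (\<forall>x\<in>X. \<forall>y\<in>X. x \<noteq> y \<longrightarrow> enat r \<le> gdist E x y)"

lemma maximal_separated_covers:
  assumes "finite V" "0 < r"
  obtains X where "X \<subseteq> V" "separated E r X" "\<And>v. v \<in> V \<Longrightarrow> \<exists>x\<in>X. gdist E x v < enat r"
proof -
  let ?P = "\<lambda>X. X \<subseteq> V \<and> separated E r X"
  have "\<exists>X. ?P X \<and> (\<forall>Y. ?P Y \<longrightarrow> card Y \<le> card X)"
  proof (rule Lattices_Big.ex_has_greatest_nat[where P = ?P and f = card and b = "card V + 1"])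
    show "?P {}" by (simp add: separated_def)
    show "\<forall>Y. ?P Y \<longrightarrow> card Y < card V + 1" using assms(1) by (simp add: card_mono less_Suc_eq_le)
  qed
  then obtain X where X: "?P X" and max: "\<And>Y. ?P Y \<Longrightarrow> card Y \<le> card X" by blast
  have "\<exists>x\<in>X. gdist E x v < enat r" if v: "v \<in> V" for v
  proof (rule ccontr)
    assume far: "\<not> ?thesis"
    moreover have "gdist E v v < enat r" using assms(2) by (simp add: zero_enat_def)
    ultimately have "v \<notin> X" by blast
    have "enat r \<le> gdist E x v" "enat r \<le> gdist E v x" if "x \<in> X" for x
      using far that gdist_sym[of E v x] by (auto simp: not_less)
    then have "?P (insert v X)" using X v by (auto simp: separated_def)
    then have "card (insert v X) \<le> card X" by (rule max)
    then show False using \<open>v \<notin> X\<close> X finite_subset[OF _ assms(1)] by auto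
  qed
  then show ?thesis using that X by blast
qed

lemma card_ball_ge:
  assumes "finite V" "\<forall>e\<in>E. e \<subseteq> V" "connected_graph V E" "x \<in> V" "r < card V"
  shows "r + 1 \<le> card {q \<in> V. gdist E x q \<le> enat r}"
proof (cases "\<exists>v\<in>V. enat r \<le> gdist E x v")
  case True
  then obtain v d where v: "v \<in> V" "gdist E x v = enat d" "r \<le> d"
    using gdist_finite_if_connected[OF assms(3,4)] by fastforce
  show ?thesis
  proof (rule card_ge_if_gdist_attains)
    fix s assume "s < r + 1"
    then obtain q where q: "gdist E x q = enat s"
      using gdist_intermediate_vertex[OF v(2), of s] v(3) by auto
    then have "q \<in> V" using gdist_finite_closed[OF assms(2,4)] by simp
    then show "\<exists>q\<in>{q \<in> V. gdist E x q \<le> enat r}. gdist E x q = enat s"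
      using q \<open>s < r + 1\<close> by auto
  qed (use assms(1) in simp)
next
  case False
  then have "{q \<in> V. gdist E x q \<le> enat r} = V" by (auto simp: not_le less_imp_le)
  then show ?thesis using assms(5) by simp
qed

text \<open>Balls of radius (r - 1) div 2 around an r-separated set are disjoint.\<close>

lemma card_separated_le:
  assumes "finite V" "\<forall>e\<in>E. e \<subseteq> V" "connected_graph V E"
    and "X \<subseteq> V" "separated E r X" "r \<le> card V"
  shows "card X * r \<le> 2 * card V"
proof (cases "r = 0")
  case False
  define \<rho> where "\<rho> = (r - 1) div 2"
  define B where "B x = {q \<in> V. gdist E x q \<le> enat \<rho>}" for x
  have balls: "card X * (\<rho> + 1) \<le> card V"
  proof (rule card_disjoint_family_le[OF assms(1) finite_subset[OF assms(4,1)]])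
    show "\<rho> + 1 \<le> card (B x)" if "x \<in> X" for x
      unfolding B_def using that assms card_ball_ge[of V E x \<rho>] False
      by (auto simp: \<rho>_def)
    show "disjoint_family_on B X"
      unfolding disjoint_family_on_def
    proof (intro ballI impI, rule ccontr)
      fix x y assume xy: "x \<in> X" "y \<in> X" "x \<noteq> y" and "B x \<inter> B y \<noteq> {}"
      then obtain q where "gdist E x q \<le> enat \<rho>" "gdist E y q \<le> enat \<rho>"
        unfolding B_def by auto
      then have "gdist E x y \<le> enat (\<rho> + \<rho>)"
        using gdist_triangle_enat gdist_sym by metis
      moreover have "\<rho> + \<rho> < r" using False by (simp add: \<rho>_def)
      ultimately have "gdist E x y < enat r" by (simp add: le_less_trans)
      then show False using assms(5) xy unfolding separated_def by (meson leD)
    qed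
  qed (auto simp: B_def)
  have "card X * r \<le> card X * (2 * (\<rho> + 1))" by (rule mult_le_mono2) (simp add: \<rho>_def)
  also have "\<dots> = 2 * (card X * (\<rho> + 1))" by (simp only: mult.left_commute)
  also have "\<dots> \<le> 2 * card V" using balls by simp
  finally show ?thesis .
qed simp

section \<open>Critical edges\<close>

definition critical_edge :: "'a set set \<Rightarrow> nat \<Rightarrow> 'a \<Rightarrow> 'a \<Rightarrow> bool" where
  "critical_edge E r u x \<longleftrightarrow> (\<exists>y. gdist E u y \<le> enat r \<and> enat r < gdist (E - {{u, x}}) u y)"

definition voronoi_cell :: "'a set \<Rightarrow> 'a set set \<Rightarrow> 'a \<Rightarrow> 'a \<Rightarrow> 'a set" where
  "voronoi_cell V E u x = {q \<in> V. \<forall>z \<in> neighbours E u - {x}.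
     gdist (edges_avoiding E u) x q < gdist (edges_avoiding E u) z q}"

lemma voronoi_cells_disjoint:
  "disjoint_family_on (voronoi_cell V E u) (neighbours E u)"
  unfolding disjoint_family_on_def
proof (intro ballI impI)
  fix x y assume "x \<in> neighbours E u" "y \<in> neighbours E u" "x \<noteq> y"
  then have "x \<in> neighbours E u - {y}" "y \<in> neighbours E u - {x}" by auto
  then have False if "q \<in> voronoi_cell V E u x" "q \<in> voronoi_cell V E u y" for q
    using that unfolding voronoi_cell_def by (blast dest: order.asym)
  then show "voronoi_cell V E u x \<inter> voronoi_cell V E u y = {}" by blast
qed

lemma critical_edge_witness:
  assumes "critical_edge E r u x"
  obtains y where "y \<noteq> u" "gdist (edges_avoiding E u) x y < enat r"
    "\<And>z. z \<in> neighbours E u - {x} \<Longrightarrow> enat r \<le> gdist (edges_avoiding E u) z y"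
proof -
  let ?H = "edges_avoiding E u"
  obtain y where y: "gdist E u y \<le> enat r" "enat r < gdist (E - {{u, x}}) u y"
    using assms unfolding critical_edge_def by blast
  have "y \<noteq> u" using y(2) by (auto simp: zero_enat_def)
  have "?H \<subseteq> E - {{u, x}}" by (auto simp: edges_avoiding_def)
  have far: "enat r \<le> gdist ?H z y" if z: "z \<in> neighbours E u - {x}" for z
  proof (rule ccontr)
    assume "\<not> ?thesis"
    then obtain d where d: "gdist ?H z y = enat d" "d < r" by (auto simp: not_le elim: less_enatE)
    have "{u, z} \<in> E - {{u, x}}" "z \<noteq> u"
      using z by (auto simp: neighbours_def doubleton_eq_iff)
    then have "gdist (E - {{u, x}}) u z \<le> enat 1"
      using gdist_edge_le_1[of u z "E - {{u, x}}"] by (simp add: one_enat_def)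
    moreover have "gdist (E - {{u, x}}) z y \<le> enat d"
      using gdist_antimono[OF \<open>?H \<subseteq> E - {{u, x}}\<close>, of z y] d(1) by simp
    ultimately have "gdist (E - {{u, x}}) u y \<le> enat (1 + d)" by (rule gdist_triangle_enat)
    also have "enat (1 + d) \<le> enat r" using d(2) by simp
    finally show False using y(2) by (simp add: leD)
  qed
  obtain z where "z \<in> neighbours E u" "gdist ?H z y < enat r"
    using gdist_via_neighbour[OF y(1) \<open>y \<noteq> u\<close>] by blast
  moreover from this have "z = x" using far by (meson DiffI leD singletonD)
  ultimately show ?thesis using that \<open>y \<noteq> u\<close> far by blast
qed

text \<open>This is where 2-edge-connectivity enters: G - ux still joins u to y, through some
  other neighbour of u, so some other neighbour is at finite distance from x in G - u.\<close>

lemma nearest_other_neighbour: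
  assumes "two_edge_connected V E" "u \<in> V" "y \<in> V" "y \<noteq> u" "x \<in> neighbours E u"
    and "gdist (edges_avoiding E u) x y \<noteq> \<infinity>"
  obtains z d where "z \<in> neighbours E u - {x}" "gdist (edges_avoiding E u) x z = enat d"
    "\<And>z'. z' \<in> neighbours E u - {x} \<Longrightarrow> enat d \<le> gdist (edges_avoiding E u) x z'"
proof -
  let ?H = "edges_avoiding E u" and ?E' = "E - {{u, x}}"
  have "{u, x} \<in> E" using assms(5) by (simp add: neighbours_def)
  then have "connected_graph V ?E'" using assms(1) by (simp add: two_edge_connected_def)
  then obtain k where "gdist ?E' u y = enat k"
    using gdist_finite_if_connected[of V ?E' u y] assms(2,3) by (cases "gdist ?E' u y") auto
  then obtain z0 where z0: "z0 \<in> neighbours ?E' u" "gdist (edges_avoiding ?E' u) z0 y < enat k"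
    using gdist_via_neighbour[of ?E' u y k] assms(4) by auto
  have "edges_avoiding ?E' u = ?H" by (auto simp: edges_avoiding_def)
  moreover have "neighbours ?E' u = neighbours E u - {x}"
    by (auto simp: neighbours_def doubleton_eq_iff)
  ultimately have z0: "z0 \<in> neighbours E u - {x}" "gdist ?H z0 y \<noteq> \<infinity>" using z0 by auto
  have "gdist ?H x z0 \<le> gdist ?H x y + gdist ?H y z0" by (rule gdist_triangle)
  then have "gdist ?H x z0 \<noteq> \<infinity>"
    using assms(6) z0(2) by (auto simp: gdist_sym[of _ y] dest: enat_ile)
  define D where "D = (LEAST d. \<exists>z\<in>neighbours E u - {x}. gdist ?H x z = d)"
  have "\<exists>d. \<exists>z\<in>neighbours E u - {x}. gdist ?H x z = d" using z0(1) by blast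
  from LeastI_ex[OF this] obtain z where z: "z \<in> neighbours E u - {x}" "gdist ?H x z = D"
    unfolding D_def by blast
  have min: "D \<le> gdist ?H x z'" if "z' \<in> neighbours E u - {x}" for z'
    unfolding D_def by (rule Least_le) (use that in blast)
  have "D \<le> gdist ?H x z0" by (rule min[OF z0(1)])
  then obtain d where "D = enat d" using \<open>gdist ?H x z0 \<noteq> \<infinity>\<close> by (cases D) auto
  then show ?thesis using that z min by blast
qed

lemma voronoi_cell_attains_distance:
  assumes "two_edge_connected V E" "\<forall>e\<in>E. e \<subseteq> V" "u \<in> V" "x \<in> neighbours E u"
    and "critical_edge E r u x" "3 * s \<le> r"
  shows "\<exists>q\<in>voronoi_cell V E u x. gdist (edges_avoiding E u) x q = enat s"
proof -
  let ?H = "edges_avoiding E u" and ?Z = "neighbours E u - {x}"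
  have H: "\<forall>e\<in>?H. e \<subseteq> V" using assms(2) by (auto simp: edges_avoiding_def)
  have "x \<in> V" using assms(2,4) by (auto simp: neighbours_def)
  have in_cell: "q \<in> voronoi_cell V E u x"
    if "gdist ?H x q = enat s" "\<And>z. z \<in> ?Z \<Longrightarrow> enat s < gdist ?H z q" for q
    using that gdist_finite_closed[OF H \<open>x \<in> V\<close>] by (auto simp: voronoi_cell_def)
  obtain y where y: "y \<noteq> u" "gdist ?H x y < enat r" "\<And>z. z \<in> ?Z \<Longrightarrow> enat r \<le> gdist ?H z y"
    using critical_edge_witness[OF assms(5)] by blast
  obtain a where a: "gdist ?H x y = enat a" "a < r" using y(2) by (auto elim: less_enatE)
  have "y \<in> V" using gdist_finite_closed[OF H \<open>x \<in> V\<close>] a(1) by simp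
  obtain z d where z: "z \<in> ?Z" "gdist ?H x z = enat d"
    and min: "\<And>z'. z' \<in> ?Z \<Longrightarrow> enat d \<le> gdist ?H x z'"
    using nearest_other_neighbour[OF assms(1,3) \<open>y \<in> V\<close> y(1) assms(4)] a(1) by auto
  have "gdist ?H z y \<le> enat (d + a)"
    using gdist_triangle_enat[of ?H z x d y a] z(2) a(1) by (simp add: gdist_sym[of _ z])
  then have "r \<le> d + a" using y(3)[OF z(1)] by (meson enat_ord_simps(1) order_trans)
  show ?thesis
  proof (cases "s \<le> a")
    case True
    then obtain q where q: "gdist ?H x q = enat s" "gdist ?H q y = enat (a - s)"
      using gdist_intermediate_vertex[OF a(1)] by blast
    have "enat s < gdist ?H z' q" if "z' \<in> ?Z" for z'
      using q(2) y(3)[OF that] True a(2) by (intro gdist_gt_if_far[of ?H q y "a - s"]) auto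
    then show ?thesis using in_cell q(1) by blast
  next
    case False
    then have "s + s < d" using \<open>r \<le> d + a\<close> assms(6) by linarith
    then obtain q where q: "gdist ?H x q = enat s" "gdist ?H q z = enat (d - s)"
      using gdist_intermediate_vertex[OF z(2)] by (metis add_leD1 less_imp_le)
    have "enat s < gdist ?H z' q" if "z' \<in> ?Z" for z'
      using q(1) min[OF that] \<open>s + s < d\<close>
      by (intro gdist_gt_if_far[of ?H q x s d]) (auto simp: gdist_sym[of _ q] gdist_sym[of _ x z'])
    then show ?thesis using in_cell q(1) by blast
  qed
qed

lemma card_critical_edges_le:
  assumes "finite V" "two_edge_connected V E" "\<forall>e\<in>E. e \<subseteq> V" "u \<in> V"
    and "K \<subseteq> neighbours E u" "\<And>x. x \<in> K \<Longrightarrow> critical_edge E r u x"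
  shows "card K * r \<le> 3 * card V"
proof -
  have "neighbours E u \<subseteq> V" using assms(3) by (auto simp: neighbours_def)
  then have "finite K" using assms(1,5) by (meson finite_subset order_trans)
  have cells: "card K * (r div 3 + 1) \<le> card V"
  proof (rule card_disjoint_family_le[OF assms(1) \<open>finite K\<close>])
    show "voronoi_cell V E u x \<subseteq> V" for x by (auto simp: voronoi_cell_def)
    show "r div 3 + 1 \<le> card (voronoi_cell V E u x)" if "x \<in> K" for x
    proof (rule card_ge_if_gdist_attains)
      fix s assume "s < r div 3 + 1"
      then have "3 * s \<le> r" by presburger
      then show "\<exists>q\<in>voronoi_cell V E u x. gdist (edges_avoiding E u) x q = enat s"
        using voronoi_cell_attains_distance[OF assms(2-4) _ assms(6)] assms(5) that by auto
    qed (simp add: voronoi_cell_def assms(1))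
    show "disjoint_family_on (voronoi_cell V E u) K"
      using assms(5) voronoi_cells_disjoint by (rule disjoint_family_on_mono)
  qed
  have "card K * r \<le> card K * (3 * (r div 3 + 1))" by (rule mult_le_mono2) presburger
  also have "\<dots> = 3 * (card K * (r div 3 + 1))" by (simp only: mult.left_commute)
  also have "\<dots> \<le> 3 * card V" using cells by simp
  finally show ?thesis .
qed

section \<open>Outcome graphs\<close>

definition far_weight :: "nat \<Rightarrow> (nat \<Rightarrow> real) \<Rightarrow> nat \<Rightarrow> nat set set \<Rightarrow> nat \<Rightarrow> real" where
  "far_weight n w \<beta> E u = (\<Sum>v \<in> {v \<in> {1..n}. enat \<beta> < gdist E u v}. w v)"

lemma player_cost_eq:
  "player_cost n w \<alpha> \<beta> S u = \<alpha> * real (card (S u)) + far_weight n w \<beta> (outcome_edges n S) u"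
  by (simp add: player_cost_def far_weight_def)

lemma far_weight_le_total:
  "(\<And>v. v \<in> {1..n} \<Longrightarrow> 0 \<le> w v) \<Longrightarrow> far_weight n w \<beta> E u \<le> sum w {1..n}"
  unfolding far_weight_def by (rule sum_mono2) auto

lemma finite_strategy: "profile n S \<Longrightarrow> finite (S u)"
  unfolding profile_def by (metis finite_Diff finite_atLeastAtMost finite.emptyI finite_subset)

lemma outcome_edges_subset: "\<forall>e\<in>outcome_edges n S. e \<subseteq> {1..n}"
  by (auto simp: outcome_edges_def)

lemma outcome_edges_mono: "S u \<subseteq> T \<Longrightarrow> outcome_edges n S \<subseteq> outcome_edges n (S(u := T))"
  unfolding outcome_edges_def by (fastforce split: if_splits)

lemma strategy_subset_neighbours:
  "profile n S \<Longrightarrow> u \<in> {1..n} \<Longrightarrow> S u \<subseteq> neighbours (outcome_edges n S) u"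
  unfolding profile_def neighbours_def outcome_edges_def by blast

lemma outcome_edges_remove_mutual:
  "x \<in> S u \<Longrightarrow> u \<in> S x \<Longrightarrow> x \<noteq> u \<Longrightarrow> outcome_edges n (S(u := S u - {x})) = outcome_edges n S"
  unfolding outcome_edges_def by (rule Collect_cong) auto

lemma outcome_edges_remove:
  assumes "profile n S" "x \<in> S u" "u \<notin> S x"
  shows "outcome_edges n (S(u := S u - {x})) = outcome_edges n S - {{u, x}}"
proof -
  have "x \<noteq> u" using assms(1,2) by (auto simp: profile_def)
  then have "(b \<in> (S(u := S u - {x})) a \<or> a \<in> (S(u := S u - {x})) b) \<longleftrightarrow>
      (b \<in> S a \<or> a \<in> S b) \<and> {a, b} \<noteq> {u, x}" for a b
    using assms(2,3) by (auto simp: doubleton_eq_iff)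
  then have "outcome_edges n (S(u := S u - {x})) =
      {{a, b} | a b. a \<in> {1..n} \<and> b \<in> {1..n} \<and> (b \<in> S a \<or> a \<in> S b) \<and> {a, b} \<noteq> {u, x}}"
    unfolding outcome_edges_def by presburger
  also have "\<dots> = outcome_edges n S - {{u, x}}" unfolding outcome_edges_def by blast
  finally show ?thesis .
qed

section \<open>Cost of a Nash equilibrium\<close>

locale nash_equilibrium =
  fixes n :: nat and w :: "nat \<Rightarrow> real" and \<alpha> :: real and \<beta> :: nat and S :: "nat \<Rightarrow> nat set"
  assumes nash: "nash_eq n w \<alpha> \<beta> S"
    and alpha_pos: "0 < \<alpha>"
    and weight_nonneg: "\<And>v. v \<in> {1..n} \<Longrightarrow> 0 \<le> w v"
begin

abbreviation "E \<equiv> outcome_edges n S"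

lemma profile: "profile n S"
  using nash by (simp add: nash_eq_def)

lemma no_improving_deviation:
  "u \<in> {1..n} \<Longrightarrow> T \<subseteq> {1..n} - {u} \<Longrightarrow>
     player_cost n w \<alpha> \<beta> S u \<le> player_cost n w \<alpha> \<beta> (S(u := T)) u"
  using nash by (simp add: nash_eq_def)

lemma player_cost_le_total_weight:
  assumes "u \<in> {1..n}"
  shows "player_cost n w \<alpha> \<beta> S u \<le> sum w {1..n}"
proof -
  have "player_cost n w \<alpha> \<beta> S u \<le> player_cost n w \<alpha> \<beta> (S(u := {})) u"
    using no_improving_deviation[OF assms] by simp
  also have "\<dots> \<le> sum w {1..n}"
    unfolding player_cost_eq using far_weight_le_total weight_nonneg by simp
  finally show ?thesis .
qed

text \<open>Dropping a bought edge saves \<alpha>, so in equilibrium it must cost some far weight.\<close>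

lemma bought_edge_critical:
  assumes u: "u \<in> {1..n}" and x: "x \<in> S u"
  shows "critical_edge E \<beta> u x"
proof (rule ccontr)
  assume not_critical: "\<not> critical_edge E \<beta> u x"
  let ?T = "S u - {x}"
  define E' where "E' = outcome_edges n (S(u := ?T))"
  have "x \<noteq> u" using profile u x by (auto simp: profile_def)
  have same_far: "enat \<beta> < gdist E' u v \<longleftrightarrow> enat \<beta> < gdist E u v" for v
  proof (cases "u \<in> S x")
    case True
    then show ?thesis
      using outcome_edges_remove_mutual[of x S u n] x \<open>x \<noteq> u\<close> by (simp add: E'_def)
  next
    case False
    then have E': "E' = E - {{u, x}}"
      using outcome_edges_remove[OF profile, of x u] x by (simp add: E'_def)
    show ?thesis
    proof
      assume "enat \<beta> < gdist E' u v"
      then show "enat \<beta> < gdist E u v"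
        using not_critical unfolding critical_edge_def E' by (meson not_le)
    next
      assume "enat \<beta> < gdist E u v"
      then show "enat \<beta> < gdist E' u v" using gdist_antimono[of E' E u v] E' by auto
    qed
  qed
  have "card (S u) = Suc (card ?T)" using card.remove[OF finite_strategy[OF profile] x] .
  then have card_T: "real (card ?T) = real (card (S u)) - 1" by simp
  have far: "far_weight n w \<beta> E' u = far_weight n w \<beta> E u"
    unfolding far_weight_def using same_far by simp
  have "player_cost n w \<alpha> \<beta> (S(u := ?T)) u = player_cost n w \<alpha> \<beta> S u - \<alpha>"
    unfolding player_cost_eq E'_def[symmetric] far by (simp add: card_T right_diff_distrib)
  moreover have "?T \<subseteq> {1..n} - {u}" using profile u by (auto simp: profile_def)
  ultimately show False using no_improving_deviation[OF u, of ?T] alpha_pos by linarith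
qed

text \<open>The deviation: u additionally buys edges to the covering set X.\<close>

lemma far_weight_le_covering:
  assumes u: "u \<in> {1..n}" and X: "X \<subseteq> {1..n}"
    and cover: "\<And>v. v \<in> {1..n} \<Longrightarrow> \<exists>x\<in>X. gdist E x v < enat \<beta>"
  shows "far_weight n w \<beta> E u \<le> \<alpha> * real (card X)"
proof -
  define T where "T = (S u \<union> X) - {u}"
  have T: "T \<subseteq> {1..n} - {u}" using profile u X by (auto simp: T_def profile_def)
  define E' where "E' = outcome_edges n (S(u := T))"
  have "E \<subseteq> E'" unfolding E'_def using profile u
    by (intro outcome_edges_mono) (auto simp: T_def profile_def)
  have "{u, x} \<in> E'" if "x \<in> X" "x \<noteq> u" for x
    unfolding E'_def outcome_edges_def using u X that
    by (intro CollectI exI[of _ u] exI[of _ x]) (auto simp: T_def)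
  then have "gdist E' u v \<le> enat \<beta>" if "v \<in> {1..n}" for v
    using cover[OF that] gdist_le_via_adjacent[OF \<open>E \<subseteq> E'\<close>] by blast
  then have "{v \<in> {1..n}. enat \<beta> < gdist E' u v} = {}" by (auto dest: leD)
  then have "far_weight n w \<beta> E' u = 0" unfolding far_weight_def by (simp only: sum.empty)
  then have "player_cost n w \<alpha> \<beta> (S(u := T)) u = \<alpha> * real (card T)"
    unfolding player_cost_eq E'_def by simp
  also have "\<dots> \<le> \<alpha> * (real (card (S u)) + real (card X))"
  proof -
    have "card T \<le> card (S u \<union> X)"
      unfolding T_def using finite_strategy[OF profile] finite_subset[OF X]
      by (intro card_mono) auto
    also have "\<dots> \<le> card (S u) + card X" by (rule card_Un_le)
    finally show ?thesis using alpha_pos by simp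
  qed
  finally show ?thesis using no_improving_deviation[OF u T] unfolding player_cost_eq
    by (simp add: algebra_simps)
qed

end

locale two_edge_connected_equilibrium = nash_equilibrium +
  assumes two_edge_connected: "two_edge_connected {1..n} (outcome_edges n S)"
    and beta_pos: "0 < \<beta>" and beta_le: "\<beta> \<le> n"
begin

lemma card_strategy_le:
  assumes "u \<in> {1..n}"
  shows "card (S u) * \<beta> \<le> 3 * n"
  using card_critical_edges_le[OF _ two_edge_connected outcome_edges_subset assms
      strategy_subset_neighbours[OF profile assms] bought_edge_critical[OF assms]]
  by simp

lemma far_weight_le:
  assumes u: "u \<in> {1..n}"
  shows "real \<beta> * far_weight n w \<beta> E u \<le> 2 * \<alpha> * real n"
proof -
  obtain X where X: "X \<subseteq> {1..n}" "separated E \<beta> X"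
    and cover: "\<And>v. v \<in> {1..n} \<Longrightarrow> \<exists>x\<in>X. gdist E x v < enat \<beta>"
    using maximal_separated_covers[of "{1..n}" \<beta> E] beta_pos by auto
  have "connected_graph {1..n} E" using two_edge_connected by (simp add: two_edge_connected_def)
  then have "card X * \<beta> \<le> 2 * n"
    using card_separated_le[OF _ outcome_edges_subset _ X] beta_le by simp
  then have card_X: "real (card X) * real \<beta> \<le> 2 * real n"
    by (metis of_nat_le_iff of_nat_mult of_nat_numeral)
  have "real \<beta> * far_weight n w \<beta> E u \<le> real \<beta> * (\<alpha> * real (card X))"
    using far_weight_le_covering[OF u X(1) cover] by (simp add: mult_left_mono)
  also have "\<dots> = \<alpha> * (real (card X) * real \<beta>)" by simp
  also have "\<dots> \<le> \<alpha> * (2 * real n)" using card_X alpha_pos by (simp add: mult_left_mono)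
  finally show ?thesis by simp
qed

lemma player_cost_le:
  assumes u: "u \<in> {1..n}"
  shows "real \<beta> * player_cost n w \<alpha> \<beta> S u \<le> 5 * real n * min \<alpha> (sum w {1..n})"
proof -
  have "real (card (S u)) * real \<beta> \<le> 3 * real n"
    using card_strategy_le[OF u] by (metis of_nat_le_iff of_nat_mult of_nat_numeral)
  then have "real \<beta> * (\<alpha> * real (card (S u))) \<le> \<alpha> * (3 * real n)"
    using alpha_pos by (simp add: mult_left_mono mult.left_commute mult.commute)
  then have "real \<beta> * player_cost n w \<alpha> \<beta> S u \<le> 5 * real n * \<alpha>"
    using far_weight_le[OF u] unfolding player_cost_eq by (simp add: algebra_simps)
  moreover have "real \<beta> * player_cost n w \<alpha> \<beta> S u \<le> 5 * real n * sum w {1..n}"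
  proof -
    have "0 \<le> sum w {1..n}" using weight_nonneg by (rule sum_nonneg)
    have "real \<beta> * player_cost n w \<alpha> \<beta> S u \<le> real \<beta> * sum w {1..n}"
      using player_cost_le_total_weight[OF u] by (simp add: mult_left_mono)
    also have "\<dots> \<le> 5 * real n * sum w {1..n}"
      using beta_le \<open>0 \<le> sum w {1..n}\<close> by (simp add: mult_right_mono)
    finally show ?thesis .
  qed
  ultimately show ?thesis by (simp add: min_def)
qed

lemma social_cost_le:
  "real \<beta> * social_cost n w \<alpha> \<beta> S \<le> 5 * real n ^ 2 * min \<alpha> (sum w {1..n})"
proof -
  have "real \<beta> * social_cost n w \<alpha> \<beta> S = (\<Sum>u\<in>{1..n}. real \<beta> * player_cost n w \<alpha> \<beta> S u)"
    unfolding social_cost_def by (rule sum_distrib_left)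
  also have "\<dots> \<le> (\<Sum>u\<in>{1..n}. 5 * real n * min \<alpha> (sum w {1..n}))"
    by (rule sum_mono) (rule player_cost_le)
  also have "\<dots> = 5 * real n ^ 2 * min \<alpha> (sum w {1..n})" by (simp add: power2_eq_square)
  finally show ?thesis .
qed

end

section \<open>Cost of the social optimum\<close>

definition isolated_players :: "nat \<Rightarrow> (nat \<Rightarrow> nat set) \<Rightarrow> nat set" where
  "isolated_players n S = {v \<in> {1..n}. S v = {} \<and> (\<forall>u\<in>{1..n}. v \<notin> S u)}"

lemma isolated_players_subset: "isolated_players n S \<subseteq> {1..n}"
  by (auto simp: isolated_players_def)

lemma far_weight_isolated:
  assumes "v \<in> isolated_players n S"
  shows "far_weight n w \<beta> (outcome_edges n S) v = sum w {1..n} - w v"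
proof -
  have "\<forall>e\<in>outcome_edges n S. v \<notin> e"
    using assms by (auto simp: isolated_players_def outcome_edges_def)
  then have "enat \<beta> < gdist (outcome_edges n S) v y \<longleftrightarrow> y \<noteq> v" for y
    using gdist_from_isolated[of "outcome_edges n S" v y]
    by (cases "y = v") (simp_all add: zero_enat_def)
  then have "{y \<in> {1..n}. enat \<beta> < gdist (outcome_edges n S) v y} = {1..n} - {v}" by blast
  moreover have "v \<in> {1..n}" using assms by (simp add: isolated_players_def)
  ultimately show ?thesis unfolding far_weight_def by (simp add: sum_diff1)
qed

lemma card_non_isolated_le:
  assumes "profile n S"
  shows "n - card (isolated_players n S) \<le> 2 * (\<Sum>u\<in>{1..n}. card (S u))"
proof -
  define B where "B = {u \<in> {1..n}. S u \<noteq> {}}"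
  have "card B \<le> (\<Sum>u\<in>{1..n}. card (S u))"
  proof -
    have "card B = (\<Sum>u\<in>B. 1)" by simp
    also have "\<dots> \<le> (\<Sum>u\<in>B. card (S u))"
      using finite_strategy[OF assms] by (intro sum_mono) (auto simp: B_def Suc_le_eq card_gt_0_iff)
    also have "\<dots> \<le> (\<Sum>u\<in>{1..n}. card (S u))" unfolding B_def by (intro sum_mono2) auto
    finally show ?thesis .
  qed
  moreover have "card (\<Union>u\<in>{1..n}. S u) \<le> (\<Sum>u\<in>{1..n}. card (S u))" by (rule card_UN_le) simp
  moreover have "card ({1..n} - isolated_players n S) \<le> card B + card (\<Union>u\<in>{1..n}. S u)"
  proof -
    have "{1..n} - isolated_players n S \<subseteq> B \<union> (\<Union>u\<in>{1..n}. S u)"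
      unfolding isolated_players_def B_def by auto
    moreover have "finite (B \<union> (\<Union>u\<in>{1..n}. S u))"
      using finite_strategy[OF assms] by (simp add: B_def)
    ultimately have "card ({1..n} - isolated_players n S) \<le> card (B \<union> (\<Union>u\<in>{1..n}. S u))"
      by (rule card_mono[rotated])
    then show ?thesis using card_Un_le[of B "\<Union>u\<in>{1..n}. S u"] by linarith
  qed
  moreover have "card ({1..n} - isolated_players n S) = n - card (isolated_players n S)"
    using card_Diff_subset[OF finite_subset[OF isolated_players_subset] isolated_players_subset]
    by simp
  ultimately show ?thesis by linarith
qed

lemma social_cost_eq:
  "social_cost n w \<alpha> \<beta> S = \<alpha> * (\<Sum>u\<in>{1..n}. real (card (S u)))
     + (\<Sum>u\<in>{1..n}. far_weight n w \<beta> (outcome_edges n S) u)"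
  unfolding social_cost_def player_cost_eq by (simp add: sum.distrib sum_distrib_left)

lemma far_weight_nonneg:
  "(\<And>v. v \<in> {1..n} \<Longrightarrow> 0 \<le> w v) \<Longrightarrow> 0 \<le> far_weight n w \<beta> E u"
  unfolding far_weight_def by (rule sum_nonneg) auto

lemma sum_far_weight_ge_isolated:
  assumes "\<And>v. v \<in> {1..n} \<Longrightarrow> 0 \<le> w v"
  shows "(real (card (isolated_players n S)) - 1) * sum w {1..n}
    \<le> (\<Sum>u\<in>{1..n}. far_weight n w \<beta> (outcome_edges n S) u)"
proof -
  let ?W = "sum w {1..n}" and ?I = "isolated_players n S"
  note I = isolated_players_subset[of n S]
  have "sum w ?I \<le> ?W" using assms I by (intro sum_mono2) auto
  then have "(real (card ?I) - 1) * ?W \<le> (\<Sum>v\<in>?I. ?W - w v)"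
    by (simp add: sum_subtractf algebra_simps)
  also have "\<dots> = (\<Sum>v\<in>?I. far_weight n w \<beta> (outcome_edges n S) v)"
    by (simp add: far_weight_isolated)
  also have "\<dots> \<le> (\<Sum>u\<in>{1..n}. far_weight n w \<beta> (outcome_edges n S) u)"
    using I far_weight_nonneg[OF assms] by (intro sum_mono2) auto
  finally show ?thesis .
qed

text \<open>Either at least half of the players are isolated, and each of them misses all weight but
  its own, or at least n/4 edges are bought.\<close>

lemma social_cost_ge:
  assumes "profile n S" "2 \<le> n" "\<And>v. v \<in> {1..n} \<Longrightarrow> 0 \<le> w v" "0 \<le> \<alpha>"
  shows "real n * min \<alpha> (sum w {1..n}) \<le> 4 * social_cost n w \<alpha> \<beta> S"
proof -
  let ?W = "sum w {1..n}" and ?k = "card (isolated_players n S)"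
  let ?C = "\<Sum>u\<in>{1..n}. real (card (S u))"
  let ?F = "\<Sum>u\<in>{1..n}. far_weight n w \<beta> (outcome_edges n S) u"
  have "0 \<le> ?W" using assms(3) by (rule sum_nonneg)
  have "0 \<le> \<alpha> * ?C" using assms(4) by (simp add: sum_nonneg)
  have "0 \<le> ?F" using far_weight_nonneg[OF assms(3)] by (simp add: sum_nonneg)
  have "?k \<le> n" using card_mono[OF _ isolated_players_subset] by simp
  then have bought: "real n - real ?k \<le> 2 * ?C"
    using card_non_isolated_le[OF assms(1)] by (simp flip: of_nat_diff of_nat_sum)
  show ?thesis
  proof (cases "2 * ?k \<le> n")
    case True
    have "real n * min \<alpha> ?W \<le> real n * \<alpha>" by (simp add: mult_left_mono)
    also have "\<dots> \<le> 4 * ?C * \<alpha>"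
      using True bought assms(4) by (intro mult_right_mono) linarith+
    also have "\<dots> \<le> 4 * social_cost n w \<alpha> \<beta> S"
      unfolding social_cost_eq using \<open>0 \<le> ?F\<close> by (simp add: algebra_simps)
    finally show ?thesis .
  next
    case False
    then have "real n + 1 \<le> 2 * real ?k"
      using of_nat_le_iff[of "n + 1" "2 * ?k", where 'a = real] by simp
    moreover have "2 \<le> real n" using assms(2) by simp
    ultimately have "real n \<le> 4 * (real ?k - 1)" by (simp add: algebra_simps)
    have "real n * min \<alpha> ?W \<le> real n * ?W" by (simp add: mult_left_mono)
    also have "\<dots> \<le> 4 * ((real ?k - 1) * ?W)"
      using mult_right_mono[OF \<open>real n \<le> 4 * (real ?k - 1)\<close> \<open>0 \<le> ?W\<close>]
      by (simp only: mult.assoc)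
    also have "\<dots> \<le> 4 * social_cost n w \<alpha> \<beta> S"
      unfolding social_cost_eq
      using sum_far_weight_ge_isolated[where n = n and w = w and S = S and \<beta> = \<beta>] assms(3)
        \<open>0 \<le> \<alpha> * ?C\<close>
      by simp
    finally show ?thesis .
  qed
qed

lemma finite_profiles: "finite {S. profile n S}"
proof -
  let ?extend = "\<lambda>f u. if u \<in> {1..n} then f u else ({} :: nat set)"
  have "{S. profile n S} \<subseteq> ?extend ` PiE {1..n} (\<lambda>_. Pow {1..n})"
  proof
    fix S assume "S \<in> {S. profile n S}"
    then have "profile n S" by simp
    then have "restrict S {1..n} \<in> PiE {1..n} (\<lambda>_. Pow {1..n})" "?extend (restrict S {1..n}) = S"
      by (auto simp: profile_def restrict_PiE_iff fun_eq_iff)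
    from this(2)[symmetric] this(1) show "S \<in> ?extend ` PiE {1..n} (\<lambda>_. Pow {1..n})"
      by (rule image_eqI)
  qed
  then show ?thesis by (rule finite_subset) (intro finite_imageI finite_PiE, auto)
qed

lemma opt_ge:
  assumes "2 \<le> n" "\<And>v. v \<in> {1..n} \<Longrightarrow> 0 \<le> w v" "0 \<le> \<alpha>"
  shows "real n * min \<alpha> (sum w {1..n}) \<le> 4 * opt n w \<alpha> \<beta>"
proof -
  have "profile n (\<lambda>_. {})" by (simp add: profile_def)
  then have "social_cost n w \<alpha> \<beta> ` {S. profile n S} \<noteq> {}" by blast
  moreover have "finite (social_cost n w \<alpha> \<beta> ` {S. profile n S})" using finite_profiles by simp
  ultimately have "opt n w \<alpha> \<beta> \<in> social_cost n w \<alpha> \<beta> ` {S. profile n S}"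
    unfolding opt_def by (rule Min_in[rotated])
  then obtain S where "profile n S" "opt n w \<alpha> \<beta> = social_cost n w \<alpha> \<beta> S" by blast
  then show ?thesis using social_cost_ge[of n S w \<alpha> \<beta>] assms by simp
qed

theorem proposition8:
  shows "\<exists>c::real. c > 0 \<and>
    (\<forall>n (w::nat \<Rightarrow> real) (\<alpha>::real) (\<beta>::nat) S.
       (\<forall>u\<in>{1..n}. w u > 0) \<longrightarrow> \<alpha> > 0 \<longrightarrow> 1 < \<beta> \<longrightarrow> \<beta> \<le> n - 1 \<longrightarrow>
       (\<exists>S'. nash_eq n w \<alpha> \<beta> S' \<and> two_edge_connected {1..n} (outcome_edges n S')) \<longrightarrow>
       nash_eq n w \<alpha> \<beta> S \<longrightarrow> two_edge_connected {1..n} (outcome_edges n S) \<longrightarrow>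
       social_cost n w \<alpha> \<beta> S / opt n w \<alpha> \<beta> \<le> c * real n / real \<beta>)"
proof (intro exI[of _ 20] conjI allI impI)
  fix n w \<alpha> \<beta> S
  assume w: "\<forall>u\<in>{1..n}. (0::real) < w u" and \<alpha>: "(0::real) < \<alpha>" and \<beta>: "1 < \<beta>" "\<beta> \<le> n - 1"
    and "nash_eq n w \<alpha> \<beta> S" "two_edge_connected {1..n} (outcome_edges n S)"
  then interpret two_edge_connected_equilibrium n w \<alpha> \<beta> S
    by unfold_locales (auto intro: less_imp_le)
  let ?m = "min \<alpha> (sum w {1..n})"
  have "2 \<le> n" using \<beta> by linarith
  have "0 < sum w {1..n}" using w \<open>2 \<le> n\<close> by (intro sum_pos) auto
  then have "0 < real n * ?m" using \<alpha> \<open>2 \<le> n\<close> by simp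
  moreover have opt: "real n * ?m \<le> 4 * opt n w \<alpha> \<beta>"
    using opt_ge[OF \<open>2 \<le> n\<close> weight_nonneg] \<alpha> by simp
  ultimately have "0 < opt n w \<alpha> \<beta>" by linarith
  have "social_cost n w \<alpha> \<beta> S * real \<beta> \<le> 5 * real n ^ 2 * ?m"
    using social_cost_le by (simp add: mult.commute)
  also have "\<dots> = 5 * real n * (real n * ?m)" by (simp add: power2_eq_square)
  also have "\<dots> \<le> 5 * real n * (4 * opt n w \<alpha> \<beta>)" using opt by (intro mult_left_mono) simp_all
  also have "\<dots> = 20 * real n * opt n w \<alpha> \<beta>" by simp
  finally have "social_cost n w \<alpha> \<beta> S \<le> 20 * real n / real \<beta> * opt n w \<alpha> \<beta>"
    using \<beta> by (simp add: pos_le_divide_eq mult.commute mult.left_commute)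
  then show "social_cost n w \<alpha> \<beta> S / opt n w \<alpha> \<beta> \<le> 20 * real n / real \<beta>"
    using \<open>0 < opt n w \<alpha> \<beta>\<close> by (simp add: pos_divide_le_eq)
qed simp

end
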